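(* Assume the network $\Sigma$ is well-posed and let $\mathcal{A}\subset X$ be nonempty and closed. (i) $\Sigma$ is ISS with respect to $\mathcal{A}$ if and only if there is $M\in\mathbb{N}$ such that $\Sigma^M$ is ISS with respect to $\mathcal{A}$ and $f$ is $\mathcal{K}$-bounded with respect to $\mathcal{A}$. (ii) $\Sigma$ is eISS with respect to $\mathcal{A}$ if and only if there is $M\in\mathbb{N}$ such that $\Sigma^M$ is eISS with respect to $\mathcal{A}$ and $f$ is $\mathcal{K}$-bounded with respect to $\mathcal{A}$ with a linear function $\kappa_1$ (i.e. $\kappa_1(s)=cs$ for some $c>0$).
   Context: Setting: for each $i\in\mathbb{N}$ fix positive integers $n_i,p_i$, norms $|\cdot|$ on $\mathbb{R}^{n_i},\mathbb{R}^{p_i}$, and a finite set $I_i\subset\mathbb{N}\setminus\{i\}$ such that each set $\{j: i\in I_j\}$ is finite; let $f_i:\mathbb{R}^{n_i}\times\prod_{j\in I_i}\mathbb{R}^{n_j}\times\mathbb{R}^{p_i}\to\mathbb{R}^{n_i}$ be continuous. $X$ (resp. $U$) is the space of sequences $(x_i)$ with $x_i\in\mathbb{R}^{n_i}$ (resp. $(u_i)$ with $u_i\in\mathbb{R}^{p_i}$) with finite norm $|x|_\infty=\sup_i|x_i|$ (resp. $|u|_\infty=\sup_i|u_i|$); $X_E=\prod_i\mathbb{R}^{n_i}$; $f:X_E\times U\to X_E$, $f(x,u)_i=f_i(x_i,(x_j)_{j\in I_i},u_i)$. The network $\Sigma$ is $x(k+1)=f(x(k),u(k))$, $k\in\mathbb{N}_0$.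 $\mathcal{U}$ is the set of sequences $u:\mathbb{N}_0\to U$ with $\|u\|_\infty:=\sup_{k\ge0}|u(k)|_\infty<\infty$; $x(k,\xi,u)$ is the solution with $x(0)=\xi$. $\Sigma$ is well-posed if $f(X\times U)\subset X$. For $\mathcal{A}\subset X$ nonempty closed, $|x|_{\mathcal{A}}:=\inf_{y\in\mathcal{A}}|x-y|_\infty$. $f$ is $\mathcal{K}$-bounded w.r.t. $\mathcal{A}$ if there are $\kappa_1,\kappa_2\in\mathcal{K}$ with $|f(\xi,\mu)|_{\mathcal{A}}\le\kappa_1(|\xi|_{\mathcal{A}})+\kappa_2(|\mu|_\infty)$ for all $\xi\in X,\mu\in U$. $\Sigma$ is ISS w.r.t. $\mathcal{A}$ if there exist $\beta\in\mathcal{KL}$, $\gamma\in\mathcal{K}$ with $|x(k,\xi,u)|_{\mathcal{A}}\le\max\{\beta(|\xi|_{\mathcal{A}},k),\gamma(\|u\|_\infty)\}$ for all $\xi\in X$, $u\in\mathcal{U}$, $k\in\mathbb{N}_0$; it is eISS if additionally $\beta$ can be taken as $\beta(r,k)=C\rho^k r$ with $C\ge1$, $\rho\in[0,1)$. For $M\in\mathbb{N}$, $\Sigma^M$ denotes the $M$-iterate system $x^+=f^M(x,(u_0,\dots,u_{M-1}))$, where $f^1=f$ and $f^{k+1}(x,(u_0,\dots,u_k))=f(f^k(x,(u_0,\dots,u_{k-1})),u_k)$; $\Sigma^M$ is ISS w.r.t. $\mathcal{A}$ if there exist $\beta\in\mathcal{KL}$, $\gamma\in\mathcal{K}$ with $|x(Mk,\xi,u)|_{\mathcal{A}}\le\max\{\beta(|\xi|_{\mathcal{A}},k),\gamma(\|u\|_\infty)\}$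 for all $\xi\in X$, $u\in\mathcal{U}$, $k\in\mathbb{N}_0$, and eISS if $\beta$ can be taken as $C\rho^k r$ with $C\ge1$, $\rho\in[0,1)$. $\mathcal{K}$: continuous strictly increasing $\gamma:[0,\infty)\to[0,\infty)$ with $\gamma(0)=0$; $\mathcal{L}$: continuous strictly decreasing functions tending to $0$; $\mathcal{KL}$: continuous $\beta$ with $\beta(\cdot,t)\in\mathcal{K}$ and $\beta(r,\cdot)\in\mathcal{L}$ for $r>0$. *)

theory Defs
  imports "HOL-Analysis.Analysis"
begin

text \<open>Vectors of R^d are modelled as functions nat => real vanishing from index d on.
  The product (pointwise) topology on nat => real, restricted to such vectors,
  is the Euclidean topology of R^d.\<close>

type_synonym vec = "nat \<Rightarrow> real"
type_synonym seqv = "nat \<Rightarrow> vec"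

definition Rn :: "nat \<Rightarrow> vec set" where
  "Rn d = {v. \<forall>k\<ge>d. v k = 0}"

definition norm_on :: "nat \<Rightarrow> (vec \<Rightarrow> real) \<Rightarrow> bool" where
  "norm_on d N \<longleftrightarrow>
     (\<forall>v\<in>Rn d. 0 \<le> N v \<and> (N v = 0 \<longleftrightarrow> v = (\<lambda>_. 0))) \<and>
     (\<forall>v\<in>Rn d. \<forall>c. N (\<lambda>k. c * v k) = \<bar>c\<bar> * N v) \<and>
     (\<forall>v\<in>Rn d. \<forall>w\<in>Rn d. N (\<lambda>k. v k + w k) \<le> N v + N w)"

definition seqE :: "(nat \<Rightarrow> nat) \<Rightarrow> seqv set" where
  "seqE d = {x. \<forall>i. x i \<in> Rn (d i)}"

definition seqB :: "(nat \<Rightarrow> nat) \<Rightarrow> (nat \<Rightarrow> vec \<Rightarrow> real) \<Rightarrow> seqv set" where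
  "seqB d N = {x \<in> seqE d. bdd_above (range (\<lambda>i. N i (x i)))}"

definition supn :: "(nat \<Rightarrow> vec \<Rightarrow> real) \<Rightarrow> seqv \<Rightarrow> real" where
  "supn N x = (SUP i. N i (x i))"

definition network_data ::
  "(nat \<Rightarrow> nat) \<Rightarrow> (nat \<Rightarrow> nat) \<Rightarrow> (nat \<Rightarrow> vec \<Rightarrow> real) \<Rightarrow> (nat \<Rightarrow> vec \<Rightarrow> real)
    \<Rightarrow> (nat \<Rightarrow> nat set) \<Rightarrow> (nat \<Rightarrow> vec \<Rightarrow> seqv \<Rightarrow> vec \<Rightarrow> vec) \<Rightarrow> bool" where
  "network_data n p Nx Nu I fi \<longleftrightarrow>
     (\<forall>i. 0 < n i \<and> 0 < p i) \<and>
     (\<forall>i. norm_on (n i) (Nx i) \<and> norm_on (p i) (Nu i)) \<and>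
     (\<forall>i. finite (I i) \<and> i \<notin> I i) \<and>
     (\<forall>i. finite {j. i \<in> I j}) \<and>
     (\<forall>i. (\<forall>a\<in>Rn (n i). \<forall>y. (\<forall>j. y j \<in> Rn (n j) \<and> (j \<notin> I i \<longrightarrow> y j = (\<lambda>_. 0))) \<longrightarrow>
             (\<forall>c\<in>Rn (p i). fi i a y c \<in> Rn (n i))) \<and>
          continuous_on
            (Rn (n i) \<times> {y. \<forall>j. y j \<in> Rn (n j) \<and> (j \<notin> I i \<longrightarrow> y j = (\<lambda>_. 0))} \<times> Rn (p i))
            (\<lambda>(a, y, c). fi i a y c))"

definition net_map :: "(nat \<Rightarrow> nat set) \<Rightarrow> (nat \<Rightarrow> vec \<Rightarrow> seqv \<Rightarrow> vec \<Rightarrow> vec) \<Rightarrow> seqv \<Rightarrow> seqv \<Rightarrow> seqv" where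
  "net_map I fi x u = (\<lambda>i. fi i (x i) (\<lambda>j. if j \<in> I i then x j else (\<lambda>_. 0)) (u i))"

definition well_posed :: "(nat \<Rightarrow> nat) \<Rightarrow> (nat \<Rightarrow> nat) \<Rightarrow> (nat \<Rightarrow> vec \<Rightarrow> real) \<Rightarrow> (nat \<Rightarrow> vec \<Rightarrow> real)
    \<Rightarrow> (seqv \<Rightarrow> seqv \<Rightarrow> seqv) \<Rightarrow> bool" where
  "well_posed n p Nx Nu F \<longleftrightarrow> (\<forall>\<xi>\<in>seqB n Nx. \<forall>\<mu>\<in>seqB p Nu. F \<xi> \<mu> \<in> seqB n Nx)"

definition dist_set :: "(nat \<Rightarrow> vec \<Rightarrow> real) \<Rightarrow> seqv set \<Rightarrow> seqv \<Rightarrow> real" where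
  "dist_set N A x = (INF y\<in>A. supn N (\<lambda>i k. x i k - y i k))"

definition closed_in_X :: "(nat \<Rightarrow> nat) \<Rightarrow> (nat \<Rightarrow> vec \<Rightarrow> real) \<Rightarrow> seqv set \<Rightarrow> bool" where
  "closed_in_X n N A \<longleftrightarrow>
     (\<forall>x\<in>seqB n N. (\<forall>e>0. \<exists>y\<in>A. supn N (\<lambda>i k. x i k - y i k) < e) \<longrightarrow> x \<in> A)"

definition inputs :: "(nat \<Rightarrow> nat) \<Rightarrow> (nat \<Rightarrow> vec \<Rightarrow> real) \<Rightarrow> (nat \<Rightarrow> seqv) set" where
  "inputs p Nu = {u. (\<forall>k. u k \<in> seqB p Nu) \<and> bdd_above (range (\<lambda>k. supn Nu (u k)))}"

definition linf :: "(nat \<Rightarrow> vec \<Rightarrow> real) \<Rightarrow> (nat \<Rightarrow> seqv) \<Rightarrow> real" where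
  "linf Nu u = (SUP k. supn Nu (u k))"

primrec traj :: "(seqv \<Rightarrow> seqv \<Rightarrow> seqv) \<Rightarrow> seqv \<Rightarrow> (nat \<Rightarrow> seqv) \<Rightarrow> nat \<Rightarrow> seqv" where
  "traj F \<xi> u 0 = \<xi>"
| "traj F \<xi> u (Suc k) = F (traj F \<xi> u k) (u k)"

definition classK :: "(real \<Rightarrow> real) \<Rightarrow> bool" where
  "classK g \<longleftrightarrow> continuous_on {0..} g \<and> strict_mono_on {0..} g \<and> g 0 = 0"

definition classL :: "(real \<Rightarrow> real) \<Rightarrow> bool" where
  "classL g \<longleftrightarrow> continuous_on {0..} g \<and>
     (\<forall>s\<ge>0. \<forall>t. s < t \<longrightarrow> g t < g s) \<and> (g \<longlongrightarrow> 0) at_top"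

definition classKL :: "(real \<Rightarrow> real \<Rightarrow> real) \<Rightarrow> bool" where
  "classKL b \<longleftrightarrow> continuous_on ({0..} \<times> {0..}) (\<lambda>(r, t). b r t) \<and>
     (\<forall>t\<ge>0. classK (\<lambda>r. b r t)) \<and> (\<forall>r>0. classL (\<lambda>t. b r t))"

definition K_bounded where
  "K_bounded n p Nx Nu F A \<longleftrightarrow> (\<exists>k1 k2. classK k1 \<and> classK k2 \<and>
     (\<forall>\<xi>\<in>seqB n Nx. \<forall>\<mu>\<in>seqB p Nu.
        dist_set Nx A (F \<xi> \<mu>) \<le> k1 (dist_set Nx A \<xi>) + k2 (supn Nu \<mu>)))"

definition K_bounded_lin where
  "K_bounded_lin n p Nx Nu F A \<longleftrightarrow> (\<exists>c k2. c > 0 \<and> classK k2 \<and>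
     (\<forall>\<xi>\<in>seqB n Nx. \<forall>\<mu>\<in>seqB p Nu.
        dist_set Nx A (F \<xi> \<mu>) \<le> c * dist_set Nx A \<xi> + k2 (supn Nu \<mu>)))"

definition ISS where
  "ISS n p Nx Nu F A \<longleftrightarrow> (\<exists>b g. classKL b \<and> classK g \<and>
     (\<forall>\<xi>\<in>seqB n Nx. \<forall>u\<in>inputs p Nu. \<forall>k.
        dist_set Nx A (traj F \<xi> u k) \<le> max (b (dist_set Nx A \<xi>) (real k)) (g (linf Nu u))))"

definition eISS where
  "eISS n p Nx Nu F A \<longleftrightarrow> (\<exists>C \<rho> g. C \<ge> 1 \<and> 0 \<le> \<rho> \<and> \<rho> < 1 \<and> classK g \<and>
     (\<forall>\<xi>\<in>seqB n Nx. \<forall>u\<in>inputs p Nu. \<forall>k.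
        dist_set Nx A (traj F \<xi> u k) \<le> max (C * \<rho> ^ k * dist_set Nx A \<xi>) (g (linf Nu u))))"

text \<open>ISS / eISS of the M-iterate system Sigma^M: x(Mk) = f^M-trajectory.\<close>
definition ISS_iter where
  "ISS_iter M n p Nx Nu F A \<longleftrightarrow> (\<exists>b g. classKL b \<and> classK g \<and>
     (\<forall>\<xi>\<in>seqB n Nx. \<forall>u\<in>inputs p Nu. \<forall>k.
        dist_set Nx A (traj F \<xi> u (M * k)) \<le> max (b (dist_set Nx A \<xi>) (real k)) (g (linf Nu u))))"

definition eISS_iter where
  "eISS_iter M n p Nx Nu F A \<longleftrightarrow> (\<exists>C \<rho> g. C \<ge> 1 \<and> 0 \<le> \<rho> \<and> \<rho> < 1 \<and> classK g \<and>
     (\<forall>\<xi>\<in>seqB n Nx. \<forall>u\<in>inputs p Nu. \<forall>k.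
        dist_set Nx A (traj F \<xi> u (M * k)) \<le> max (C * \<rho> ^ k * dist_set Nx A \<xi>) (g (linf Nu u))))"

end

theory Submission
  imports Defs "HOL-Real_Asymp.Real_Asymp"
begin

(* The forward implications are immediate: take M = 1, and read off the K-bound of f from the
   ISS estimate after one step with a constant input.
   Conversely, if |f(x, u)|_A \<le> \<kappa>\<^sub>1(|x|_A) + \<kappa>\<^sub>2(|u|), then d_k = |x(k)|_A and h = \<kappa>\<^sub>2(\<parallel>u\<parallel>)
   satisfy d_{k+1} + h \<le> \<sigma>(d_k + h) with \<sigma>(s) = \<kappa>\<^sub>1(s) + 2s. Between consecutive sampling
   instants the state thus grows at most by the class-K function \<sigma>^M, which turns the estimate
   for \<Sigma>^M at the instants Mj into an estimate at every instant k, with j = k div M \<ge> k/M - 1.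
   In the linear case \<sigma>^M is multiplication by (c + 2)^M, and the decay rate \<rho> per M steps
   becomes \<rho>^(1/M) per step. *)

section \<open>Comparison functions\<close>

lemma classK_mono: "classK g \<Longrightarrow> 0 \<le> x \<Longrightarrow> x \<le> y \<Longrightarrow> g x \<le> g y"
  unfolding classK_def
  by (metis atLeast_iff dual_order.trans less_eq_real_def strict_mono_onD)

lemma classK_nonneg: "classK g \<Longrightarrow> 0 \<le> x \<Longrightarrow> 0 \<le> g x"
  using classK_mono[of g 0 x] by (simp add: classK_def)

lemma classK_max: "classK g \<Longrightarrow> 0 \<le> x \<Longrightarrow> 0 \<le> y \<Longrightarrow> g (max x y) = max (g x) (g y)"
  using classK_mono[of g x y] classK_mono[of g y x] by (auto simp: max_def)

lemma classK_id: "classK (\<lambda>x. x)"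
  unfolding classK_def by (auto intro!: continuous_intros strict_mono_onI)

lemma classK_scale: "0 < c \<Longrightarrow> classK (\<lambda>x. c * x)"
  unfolding classK_def by (auto intro!: continuous_intros strict_mono_onI)

lemma classK_comp:
  assumes f: "classK f" and g: "classK g"
  shows "classK (\<lambda>x. f (g x))"
proof -
  have "continuous_on {0..} (\<lambda>x. f (g x))"
    by (rule continuous_on_compose2[of "{0..}" f])
      (use f g classK_nonneg[OF g] in \<open>auto simp: classK_def\<close>)
  moreover have "strict_mono_on {0..} (\<lambda>x. f (g x))"
  proof (rule strict_mono_onI)
    fix r s :: real
    assume "r \<in> {0..}" "s \<in> {0..}" "r < s"
    then have "g r < g s"
      using g unfolding classK_def by (blast intro: strict_mono_onD)
    moreover have "0 \<le> g r"
      using classK_nonneg[OF g] \<open>r \<in> {0..}\<close> by simp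
    ultimately show "f (g r) < f (g s)"
      using f unfolding classK_def by (auto intro: strict_mono_onD)
  qed
  ultimately show ?thesis
    using f g by (simp add: classK_def)
qed

lemma classK_add:
  assumes f: "classK f" and g: "classK g"
  shows "classK (\<lambda>x. f x + g x)"
proof -
  have "strict_mono_on {0..} (\<lambda>x. f x + g x)"
  proof (rule strict_mono_onI)
    fix r s :: real
    assume "r \<in> {0..}" "s \<in> {0..}" "r < s"
    then have "f r < f s" "g r < g s"
      using f g unfolding classK_def by (blast intro: strict_mono_onD)+
    then show "f r + g r < f s + g s"
      by simp
  qed
  then show ?thesis
    using f g by (auto simp: classK_def intro!: continuous_intros)
qed

lemma classKL_classK: "classKL b \<Longrightarrow> 0 \<le> t \<Longrightarrow> classK (\<lambda>r. b r t)"
  by (simp add: classKL_def)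

lemma classL_antimono: "classL \<beta> \<Longrightarrow> 0 \<le> t1 \<Longrightarrow> t1 \<le> t2 \<Longrightarrow> \<beta> t2 \<le> \<beta> t1"
  by (cases "t1 = t2") (auto simp: classL_def less_eq_real_def)

lemma classKL_antimono:
  assumes b: "classKL b" and s: "0 \<le> s" and t: "0 \<le> t1" "t1 \<le> t2"
  shows "b s t2 \<le> b s t1"
proof (cases "s = 0")
  case True
  then show ?thesis
    using b t by (auto simp: classKL_def classK_def)
next
  case False
  then have "classL (\<lambda>t. b s t)"
    using b s by (simp add: classKL_def)
  from classL_antimono[OF this t] show ?thesis
    by simp
qed

text \<open>The summand \<open>exp (- t) * s\<close> restores strict decrease in \<open>t\<close>, which \<open>\<beta> (m t)\<close>
  loses wherever the time change \<open>m\<close> is constant.\<close>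

lemma classL_time_change:
  fixes \<beta> m :: "real \<Rightarrow> real"
  assumes \<beta>: "classL \<beta>" and \<beta>_nonneg: "\<And>t. 0 \<le> t \<Longrightarrow> 0 \<le> \<beta> t" and G: "classK G"
    and m_cont: "continuous_on {0..} m" and m_mono: "mono m" and m_nonneg: "\<And>t. 0 \<le> m t"
    and m_lim: "filterlim m at_top at_top" and s: "0 < s"
  shows "classL (\<lambda>t. G (\<beta> (m t)) + exp (- t) * s)"
proof -
  have G_cont: "continuous_on {0..} G"
    using G by (simp add: classK_def)
  have "continuous_on {0..} (\<lambda>t. \<beta> (m t))"
    by (intro continuous_on_compose2[OF _ m_cont]) (use \<beta> m_nonneg in \<open>auto simp: classL_def\<close>)
  then have "continuous_on {0..} (\<lambda>t. G (\<beta> (m t)))"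
    by (rule continuous_on_compose2[OF G_cont]) (use \<beta>_nonneg m_nonneg in auto)
  then have cont: "continuous_on {0..} (\<lambda>t. G (\<beta> (m t)) + exp (- t) * s)"
    by (intro continuous_intros)
  have decr: "G (\<beta> (m t)) + exp (- t) * s < G (\<beta> (m t')) + exp (- t') * s" if "t' < t" for t t'
  proof -
    have "\<beta> (m t) \<le> \<beta> (m t')"
      using classL_antimono[OF \<beta> m_nonneg] m_mono \<open>t' < t\<close> by (simp add: monoD)
    then have "G (\<beta> (m t)) \<le> G (\<beta> (m t'))"
      using classK_mono[OF G] \<beta>_nonneg m_nonneg by simp
    moreover have "exp (- t) * s < exp (- t') * s"
      using s \<open>t' < t\<close> by simp
    ultimately show ?thesis
      by linarith
  qed
  have "(\<beta> \<longlongrightarrow> 0) at_top"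
    using \<beta> by (simp add: classL_def)
  then have "((\<lambda>t. \<beta> (m t)) \<longlongrightarrow> 0) at_top"
    using filterlim_compose m_lim by blast
  then have "((\<lambda>t. G (\<beta> (m t))) \<longlongrightarrow> G 0) at_top"
    by (rule continuous_on_tendsto_compose[OF G_cont]) (use \<beta>_nonneg m_nonneg in auto)
  moreover have "((\<lambda>t. exp (- t) * s) \<longlongrightarrow> 0) at_top"
    by real_asymp
  ultimately have "((\<lambda>t. G (\<beta> (m t)) + exp (- t) * s) \<longlongrightarrow> G 0 + 0) at_top"
    by (rule tendsto_add)
  then show ?thesis
    using cont decr G by (simp add: classL_def classK_def)
qed

lemma classKL_time_change:
  fixes m :: "real \<Rightarrow> real"
  assumes b: "classKL b" and G: "classK G"
    and m_cont: "continuous_on {0..} m" and m_mono: "mono m" and m_nonneg: "\<And>t. 0 \<le> m t"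
    and m_lim: "filterlim m at_top at_top"
  shows "classKL (\<lambda>s t. G (b s (m t)) + exp (- t) * s)"
proof -
  have bK: "classK (\<lambda>r. b r t)" if "0 \<le> t" for t
    using classKL_classK[OF b that] .
  have b_nonneg: "0 \<le> r \<Longrightarrow> 0 \<le> t \<Longrightarrow> 0 \<le> b r t" for r t
    using classK_nonneg[OF bK] .
  have "continuous_on ({0..} \<times> {0..}) (\<lambda>z::real \<times> real. m (snd z))"
    by (rule continuous_on_compose2[OF m_cont continuous_on_snd[OF continuous_on_id]]) auto
  then have "continuous_on ({0..} \<times> {0..}) (\<lambda>z::real \<times> real. (fst z, m (snd z)))"
    by (intro continuous_intros)
  moreover have "continuous_on ({0..} \<times> {0..}) (\<lambda>z. b (fst z) (snd z))"
    using b by (simp add: classKL_def split_def)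
  ultimately have b_cont: "continuous_on ({0..} \<times> {0..}) (\<lambda>z. b (fst z) (m (snd z)))"
    using continuous_on_compose2[where g = "\<lambda>z. b (fst z) (snd z)"] m_nonneg by force
  have "continuous_on ({0..} \<times> {0..}) (\<lambda>z. G (b (fst z) (m (snd z))))"
    using G by (intro continuous_on_compose2[OF _ b_cont]) (auto simp: classK_def b_nonneg m_nonneg)
  then have "continuous_on ({0..} \<times> {0..}) (\<lambda>(s, t). G (b s (m t)) + exp (- t) * s)"
    unfolding split_def by (intro continuous_intros)
  moreover have "classK (\<lambda>s. G (b s (m t)) + exp (- t) * s)" for t
    by (intro classK_add classK_comp[OF G bK] classK_scale m_nonneg) simp
  moreover have "classL (\<lambda>t. G (b s (m t)) + exp (- t) * s)" if "0 < s" for s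
    using b that by (intro classL_time_change[OF _ _ G m_cont m_mono m_nonneg m_lim])
      (simp_all add: classKL_def b_nonneg)
  ultimately show ?thesis
    by (simp add: classKL_def)
qed

lemma time_change_le_div:
  assumes M: "0 < M"
  shows "max (real k / real M - 1) 0 \<le> real (k div M)"
proof -
  have "k < M * (k div M) + M"
    using mod_less_divisor[OF M, of k] mult_div_mod_eq[of M k] by linarith
  then have "real k < real M * (real (k div M) + 1)"
    by (simp add: algebra_simps flip: of_nat_mult of_nat_add)
  then show ?thesis
    using M by (simp add: field_simps)
qed

lemma classKL_sampled_time:
  assumes b: "classKL b" and G: "classK G" and M: "0 < M"
  shows "classKL (\<lambda>s t. G (b s (max (t / real M - 1) 0)) + exp (- t) * s)"
proof (rule classKL_time_change[OF b G])
  show "continuous_on {0..} (\<lambda>t. max (t / real M - 1) 0)"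
    using M by (auto intro!: continuous_intros)
  show "mono (\<lambda>t. max (t / real M - 1) 0)"
    using M by (auto intro!: monoI max.mono divide_right_mono diff_right_mono)
  show "filterlim (\<lambda>t. max (t / real M - 1) 0) at_top at_top"
    using M by real_asymp
qed simp

section \<open>Growth between sampling instants\<close>

definition gain :: "(real \<Rightarrow> real) \<Rightarrow> real \<Rightarrow> real" where
  "gain k1 s = k1 s + 2 * s"

lemma classK_gain: "classK k1 \<Longrightarrow> classK (gain k1)"
  unfolding gain_def[abs_def] by (intro classK_add classK_scale) simp_all

lemma classK_funpow_gain: "classK k1 \<Longrightarrow> classK (gain k1 ^^ m)"
  by (induction m) (simp_all add: id_def classK_id classK_comp classK_gain comp_def)

lemma gain_ge: "classK k1 \<Longrightarrow> 0 \<le> x \<Longrightarrow> x \<le> gain k1 x"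
  using classK_nonneg[of k1 x] by (simp add: gain_def)

lemma funpow_gain_ge: "classK k1 \<Longrightarrow> 0 \<le> x \<Longrightarrow> x \<le> (gain k1 ^^ r) x"
  by (induction r) (auto intro: order_trans gain_ge)

lemma funpow_gain_mono:
  assumes k1: "classK k1" and x: "0 \<le> x" and r: "r \<le> M"
  shows "(gain k1 ^^ r) x \<le> (gain k1 ^^ M) x"
proof -
  have "(gain k1 ^^ M) x = (gain k1 ^^ (M - r)) ((gain k1 ^^ r) x)"
    using r by (metis comp_apply funpow_add le_add_diff_inverse2)
  then show ?thesis
    using funpow_gain_ge[OF k1] funpow_gain_ge[OF k1 x] x by (metis order_trans)
qed

lemma funpow_gain_linear: "(gain (\<lambda>s. c * s) ^^ r) x = (c + 2) ^ r * (x :: real)"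
  by (induction r) (simp_all add: gain_def algebra_simps)

lemma funpow_gain_bound:
  fixes d :: "nat \<Rightarrow> real"
  assumes k1: "classK k1" and d_nonneg: "\<And>k. 0 \<le> d k" and h: "0 \<le> h"
    and step: "\<And>k. d (Suc k) \<le> k1 (d k) + h"
  shows "d (k + r) + h \<le> (gain k1 ^^ r) (d k + h)"
proof (induction r)
  case 0
  then show ?case by simp
next
  case (Suc r)
  have "d (k + Suc r) + h \<le> k1 (d (k + r)) + 2 * h"
    using step[of "k + r"] by simp
  also have "\<dots> \<le> gain k1 (d (k + r) + h)"
    unfolding gain_def using classK_mono[OF k1 d_nonneg, of "k + r" "d (k + r) + h"] d_nonneg[of "k + r"] h
    by simp
  also have "\<dots> \<le> gain k1 ((gain k1 ^^ r) (d k + h))"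
    using classK_mono[OF classK_gain[OF k1] _ Suc.IH] d_nonneg h by (simp add: add_nonneg_nonneg)
  finally show ?case by simp
qed

lemma subsampled_bound:
  fixes d \<beta> :: "nat \<Rightarrow> real"
  assumes k1: "classK k1" and M: "0 < M" and d_nonneg: "\<And>k. 0 \<le> d k" and h: "0 \<le> h"
    and step: "\<And>k. d (Suc k) \<le> k1 (d k) + h"
    and sampled: "\<And>j. d (M * j) \<le> max (\<beta> j) w" and \<beta>: "\<And>j. 0 \<le> \<beta> j" and w: "0 \<le> w"
  shows "d k \<le> max ((gain k1 ^^ M) (2 * \<beta> (k div M))) ((gain k1 ^^ M) (2 * (w + h)))"
proof -
  let ?S = "gain k1 ^^ M" and ?j = "k div M"
  have S: "classK ?S"
    using classK_funpow_gain[OF k1] .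
  have "d k + h \<le> (gain k1 ^^ (k mod M)) (d (M * ?j) + h)"
    using funpow_gain_bound[where d = d, OF k1 d_nonneg h step, of "M * ?j" "k mod M"] by simp
  also have "\<dots> \<le> ?S (d (M * ?j) + h)"
    using funpow_gain_mono[OF k1] d_nonneg h M by (simp add: less_imp_le)
  also have "\<dots> \<le> ?S (max (2 * \<beta> ?j) (2 * (w + h)))"
  proof (rule classK_mono[OF S])
    show "0 \<le> d (M * ?j) + h"
      using d_nonneg h by (simp add: add_nonneg_nonneg)
    show "d (M * ?j) + h \<le> max (2 * \<beta> ?j) (2 * (w + h))"
      using sampled[of ?j] \<beta>[of ?j] w h by (simp add: max_def split: if_splits)
  qed
  also have "\<dots> = max (?S (2 * \<beta> ?j)) (?S (2 * (w + h)))"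
    using classK_max[OF S] \<beta> w h by simp
  finally show ?thesis
    using h by simp
qed

lemma geometric_rate_subsampling:
  fixes \<rho> :: real
  assumes \<rho>: "0 \<le> \<rho>" "\<rho> < 1" and M: "0 < M"
  obtains \<rho>' C0 where "0 < \<rho>'" "\<rho>' < 1" "1 \<le> C0" "\<And>k. \<rho> ^ (k div M) \<le> C0 * \<rho>' ^ k"
proof -
  define \<rho>1 where "\<rho>1 = max \<rho> (1 / 2)"
  have \<rho>1: "0 < \<rho>1" "\<rho>1 < 1" "\<rho> \<le> \<rho>1"
    using \<rho> by (auto simp: \<rho>1_def)
  define \<rho>' where "\<rho>' = root M \<rho>1"
  have \<rho>': "0 < \<rho>'" "\<rho>' < 1" "\<rho>' ^ M = \<rho>1"
    using \<rho>1 M by (auto simp: \<rho>'_def real_root_pow_pos2)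
  have "\<rho> ^ (k div M) \<le> 1 / \<rho>1 * \<rho>' ^ k" for k
  proof -
    let ?j = "k div M"
    have "\<rho> ^ ?j \<le> \<rho>1 ^ ?j"
      using \<rho> \<rho>1 by (simp add: power_mono)
    also have "\<dots> = \<rho>' ^ (M * ?j)"
      using \<rho>' by (simp add: power_mult)
    finally have "\<rho> ^ ?j * \<rho>1 \<le> \<rho>' ^ (M * ?j) * \<rho>1"
      using \<rho>1 by (simp add: mult_right_mono)
    also have "\<dots> \<le> \<rho>' ^ (M * ?j) * \<rho>' ^ (k mod M)"
      using power_decreasing[of "k mod M" M \<rho>'] \<rho>' M by (simp add: less_imp_le)
    also have "\<dots> = \<rho>' ^ k"
      by (metis div_mult_mod_eq mult.commute power_add)
    finally show ?thesis
      using \<rho>1 by (simp add: field_simps)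
  qed
  then show thesis
    using that[of \<rho>' "1 / \<rho>1"] \<rho>' \<rho>1 by simp
qed

section \<open>Sup norms and distance to the set\<close>

lemma norm_on_diff_le:
  assumes N: "norm_on d N" and v: "v \<in> Rn d" and w: "w \<in> Rn d"
  shows "N (\<lambda>k. v k - w k) \<le> N v + N w"
proof -
  have w': "(\<lambda>k. (- 1) * w k) \<in> Rn d"
    using w by (simp add: Rn_def)
  have triangle: "\<forall>v\<in>Rn d. \<forall>w\<in>Rn d. N (\<lambda>k. v k + w k) \<le> N v + N w"
    using N by (simp add: norm_on_def)
  have "N (\<lambda>k. v k + (- 1) * w k) \<le> N v + N (\<lambda>k. (- 1) * w k)"
    using bspec[OF bspec[OF triangle v] w'] by simp
  moreover have "N (\<lambda>k. (- 1) * w k) = N w"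
    using N w unfolding norm_on_def by (metis abs_minus_cancel abs_one mult_1)
  ultimately show ?thesis
    by simp
qed

lemma seqB_diff:
  assumes N: "\<And>i. norm_on (d i) (N i)" and x: "x \<in> seqB d N" and y: "y \<in> seqB d N"
  shows "(\<lambda>i k. x i k - y i k) \<in> seqB d N"
proof -
  obtain Bx By where "\<And>i. N i (x i) \<le> Bx" "\<And>i. N i (y i) \<le> By"
    using x y unfolding seqB_def bdd_above_def by auto
  moreover have "x i \<in> Rn (d i)" "y i \<in> Rn (d i)" for i
    using x y unfolding seqB_def seqE_def by auto
  ultimately have "N i (\<lambda>k. x i k - y i k) \<le> Bx + By" for i
    using norm_on_diff_le[OF N] by (meson add_mono order_trans)
  then show ?thesis
    using x y by (auto simp: seqB_def seqE_def Rn_def intro!: bdd_aboveI[where M = "Bx + By"])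
qed

lemma supn_nonneg:
  assumes N: "\<And>i. norm_on (d i) (N i)" and x: "x \<in> seqB d N"
  shows "0 \<le> supn N x"
proof -
  have "0 \<le> N 0 (x 0)"
    using N[of 0] x unfolding norm_on_def seqB_def seqE_def by blast
  also have "\<dots> \<le> supn N x"
    unfolding supn_def using x by (auto simp: seqB_def intro: cSUP_upper)
  finally show ?thesis .
qed

lemma dist_set_nonneg:
  assumes N: "\<And>i. norm_on (d i) (N i)" and A: "A \<subseteq> seqB d N" "A \<noteq> {}"
    and x: "x \<in> seqB d N"
  shows "0 \<le> dist_set N A x"
  unfolding dist_set_def
  using supn_nonneg[OF N seqB_diff[OF N x]] A by (auto intro!: cINF_greatest)

lemma supn_le_linf: "u \<in> inputs p Nu \<Longrightarrow> supn Nu (u k) \<le> linf Nu u"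
  unfolding linf_def inputs_def by (auto intro: cSUP_upper)

lemma linf_nonneg:
  assumes N: "\<And>i. norm_on (p i) (Nu i)" and u: "u \<in> inputs p Nu"
  shows "0 \<le> linf Nu u"
  using supn_nonneg[where N = Nu, OF N, of "u 0"] supn_le_linf[OF u, of 0] u by (auto simp: inputs_def)

lemma constant_input: "\<mu> \<in> seqB p Nu \<Longrightarrow> (\<lambda>_. \<mu>) \<in> inputs p Nu"
  by (simp add: inputs_def)

lemma linf_constant: "linf Nu (\<lambda>_. \<mu>) = supn Nu \<mu>"
  by (simp add: linf_def)

lemma traj_in_seqB:
  "well_posed n p Nx Nu F \<Longrightarrow> \<xi> \<in> seqB n Nx \<Longrightarrow> u \<in> inputs p Nu \<Longrightarrow> traj F \<xi> u k \<in> seqB n Nx"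
  by (induction k) (auto simp: well_posed_def inputs_def)

section \<open>ISS of a system versus ISS of its iterates\<close>

locale stability_setting =
  fixes n p :: "nat \<Rightarrow> nat" and Nx Nu :: "nat \<Rightarrow> vec \<Rightarrow> real"
    and F :: "seqv \<Rightarrow> seqv \<Rightarrow> seqv" and A :: "seqv set"
  assumes norm_x: "\<And>i. norm_on (n i) (Nx i)" and norm_u: "\<And>i. norm_on (p i) (Nu i)"
    and A_sub: "A \<subseteq> seqB n Nx" and A_ne: "A \<noteq> {}"
begin

lemma dist_nonneg: "x \<in> seqB n Nx \<Longrightarrow> 0 \<le> dist_set Nx A x"
  using dist_set_nonneg[where N = Nx, OF norm_x A_sub A_ne] .

lemma ISS_iter_one: "ISS_iter 1 n p Nx Nu F A \<longleftrightarrow> ISS n p Nx Nu F A"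
  by (simp add: ISS_def ISS_iter_def)

lemma eISS_iter_one: "eISS_iter 1 n p Nx Nu F A \<longleftrightarrow> eISS n p Nx Nu F A"
  by (simp add: eISS_def eISS_iter_def)

lemma ISS_imp_K_bounded:
  assumes "ISS n p Nx Nu F A"
  shows "K_bounded n p Nx Nu F A"
proof -
  obtain b g where b: "classKL b" and g: "classK g" and est: "\<forall>\<xi>\<in>seqB n Nx. \<forall>u\<in>inputs p Nu. \<forall>k.
      dist_set Nx A (traj F \<xi> u k) \<le> max (b (dist_set Nx A \<xi>) (real k)) (g (linf Nu u))"
    using assms unfolding ISS_def by blast
  have "dist_set Nx A (F \<xi> \<mu>) \<le> b (dist_set Nx A \<xi>) 1 + g (supn Nu \<mu>)"
    if \<xi>: "\<xi> \<in> seqB n Nx" and \<mu>: "\<mu> \<in> seqB p Nu" for \<xi> \<mu>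
  proof -
    have "dist_set Nx A (traj F \<xi> (\<lambda>_. \<mu>) 1)
        \<le> max (b (dist_set Nx A \<xi>) (real 1)) (g (linf Nu (\<lambda>_. \<mu>)))"
      using est \<xi> constant_input[OF \<mu>] by blast
    then have "dist_set Nx A (F \<xi> \<mu>) \<le> max (b (dist_set Nx A \<xi>) 1) (g (supn Nu \<mu>))"
      by (simp add: linf_constant)
    moreover have "0 \<le> b (dist_set Nx A \<xi>) 1"
      using classK_nonneg[OF classKL_classK[OF b] dist_nonneg[OF \<xi>]] by simp
    moreover have "0 \<le> g (supn Nu \<mu>)"
      using classK_nonneg[OF g supn_nonneg[where N = Nu, OF norm_u \<mu>]] .
    ultimately show ?thesis
      by linarith
  qed
  then show ?thesis
    unfolding K_bounded_def using classKL_classK[OF b, of 1] g by auto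
qed

lemma eISS_imp_K_bounded_lin:
  assumes "eISS n p Nx Nu F A"
  shows "K_bounded_lin n p Nx Nu F A"
proof -
  obtain C \<rho> g where C: "1 \<le> C" and \<rho>: "0 \<le> \<rho>" "\<rho> < 1" and g: "classK g"
    and est: "\<forall>\<xi>\<in>seqB n Nx. \<forall>u\<in>inputs p Nu. \<forall>k.
      dist_set Nx A (traj F \<xi> u k) \<le> max (C * \<rho> ^ k * dist_set Nx A \<xi>) (g (linf Nu u))"
    using assms unfolding eISS_def by blast
  have "dist_set Nx A (F \<xi> \<mu>) \<le> C * dist_set Nx A \<xi> + g (supn Nu \<mu>)"
    if \<xi>: "\<xi> \<in> seqB n Nx" and \<mu>: "\<mu> \<in> seqB p Nu" for \<xi> \<mu>
  proof -
    have "dist_set Nx A (traj F \<xi> (\<lambda>_. \<mu>) 1)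
        \<le> max (C * \<rho> ^ 1 * dist_set Nx A \<xi>) (g (linf Nu (\<lambda>_. \<mu>)))"
      using est \<xi> constant_input[OF \<mu>] by blast
    then have "dist_set Nx A (F \<xi> \<mu>) \<le> max (C * \<rho> * dist_set Nx A \<xi>) (g (supn Nu \<mu>))"
      by (simp add: linf_constant)
    moreover have "C * \<rho> * dist_set Nx A \<xi> \<le> C * dist_set Nx A \<xi>"
      using C \<rho> dist_nonneg[OF \<xi>] by (simp add: mult_left_le_one_le)
    moreover have "0 \<le> C * dist_set Nx A \<xi>"
      using C dist_nonneg[OF \<xi>] by simp
    moreover have "0 \<le> g (supn Nu \<mu>)"
      using classK_nonneg[OF g supn_nonneg[where N = Nu, OF norm_u \<mu>]] .
    ultimately show ?thesis
      by linarith
  qed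
  then show ?thesis
    unfolding K_bounded_lin_def using C g by (auto intro!: exI[of _ C])
qed

lemma traj_dist_step:
  assumes wp: "well_posed n p Nx Nu F" and k2: "classK k2"
    and bound: "\<forall>\<xi>\<in>seqB n Nx. \<forall>\<mu>\<in>seqB p Nu.
      dist_set Nx A (F \<xi> \<mu>) \<le> k1 (dist_set Nx A \<xi>) + k2 (supn Nu \<mu>)"
    and \<xi>: "\<xi> \<in> seqB n Nx" and u: "u \<in> inputs p Nu"
  shows "dist_set Nx A (traj F \<xi> u (Suc k)) \<le> k1 (dist_set Nx A (traj F \<xi> u k)) + k2 (linf Nu u)"
proof -
  have uk: "u k \<in> seqB p Nu"
    using u by (simp add: inputs_def)
  have "dist_set Nx A (F (traj F \<xi> u k) (u k))
      \<le> k1 (dist_set Nx A (traj F \<xi> u k)) + k2 (supn Nu (u k))"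
    using bound traj_in_seqB[OF wp \<xi> u, of k] uk by blast
  moreover have "k2 (supn Nu (u k)) \<le> k2 (linf Nu u)"
    using classK_mono[OF k2 supn_nonneg[where N = Nu, OF norm_u uk] supn_le_linf[OF u]] .
  ultimately show ?thesis
    by simp
qed

lemma traj_bound_from_samples:
  assumes wp: "well_posed n p Nx Nu F" and M: "0 < M" and k1: "classK k1" and k2: "classK k2"
    and bound: "\<forall>\<xi>\<in>seqB n Nx. \<forall>\<mu>\<in>seqB p Nu.
      dist_set Nx A (F \<xi> \<mu>) \<le> k1 (dist_set Nx A \<xi>) + k2 (supn Nu \<mu>)"
    and \<xi>: "\<xi> \<in> seqB n Nx" and u: "u \<in> inputs p Nu"
    and sampled: "\<And>j. dist_set Nx A (traj F \<xi> u (M * j)) \<le> max (\<beta> j) w"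
    and \<beta>: "\<And>j. 0 \<le> \<beta> j" and w: "0 \<le> w"
  shows "dist_set Nx A (traj F \<xi> u k)
    \<le> max ((gain k1 ^^ M) (2 * \<beta> (k div M))) ((gain k1 ^^ M) (2 * (w + k2 (linf Nu u))))"
  by (rule subsampled_bound[where d = "\<lambda>k. dist_set Nx A (traj F \<xi> u k)", OF k1 M
        dist_nonneg[OF traj_in_seqB[OF wp \<xi> u]] classK_nonneg[OF k2 linf_nonneg[OF norm_u u]]
        traj_dist_step[OF wp k2 bound \<xi> u] sampled \<beta> w])

lemma ISS_iter_K_bounded_imp_ISS:
  assumes wp: "well_posed n p Nx Nu F" and M: "0 < M"
    and iss: "ISS_iter M n p Nx Nu F A" and kb: "K_bounded n p Nx Nu F A"
  shows "ISS n p Nx Nu F A"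
proof -
  obtain b g where b: "classKL b" and g: "classK g" and est: "\<forall>\<xi>\<in>seqB n Nx. \<forall>u\<in>inputs p Nu. \<forall>j.
      dist_set Nx A (traj F \<xi> u (M * j)) \<le> max (b (dist_set Nx A \<xi>) (real j)) (g (linf Nu u))"
    using iss unfolding ISS_iter_def by blast
  obtain k1 k2 where k1: "classK k1" and k2: "classK k2" and bound: "\<forall>\<xi>\<in>seqB n Nx. \<forall>\<mu>\<in>seqB p Nu.
      dist_set Nx A (F \<xi> \<mu>) \<le> k1 (dist_set Nx A \<xi>) + k2 (supn Nu \<mu>)"
    using kb unfolding K_bounded_def by blast
  define G where "G x = (gain k1 ^^ M) (2 * x)" for x
  define B where "B s t = G (b s (max (t / real M - 1) 0)) + exp (- t) * s" for s t
  define \<gamma> where "\<gamma> v = G (g v + k2 v)" for v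
  have G: "classK G"
    unfolding G_def by (intro classK_comp[OF classK_funpow_gain[OF k1] classK_scale]) simp
  have "classKL B"
    unfolding B_def by (rule classKL_sampled_time[OF b G M])
  moreover have "classK \<gamma>"
    unfolding \<gamma>_def by (intro classK_comp[OF G] classK_add g k2)
  moreover have "dist_set Nx A (traj F \<xi> u k) \<le> max (B (dist_set Nx A \<xi>) (real k)) (\<gamma> (linf Nu u))"
    if \<xi>: "\<xi> \<in> seqB n Nx" and u: "u \<in> inputs p Nu" for \<xi> u k
  proof -
    let ?d0 = "dist_set Nx A \<xi>" and ?v = "linf Nu u"
    have d0: "0 \<le> ?d0"
      using dist_nonneg[OF \<xi>] .
    have b_nonneg: "0 \<le> b ?d0 (real j)" for j
      using classK_nonneg[OF classKL_classK[OF b] d0] by simp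
    have "dist_set Nx A (traj F \<xi> u k) \<le> max (G (b ?d0 (real (k div M)))) (\<gamma> ?v)"
      unfolding G_def \<gamma>_def
      by (rule traj_bound_from_samples[OF wp M k1 k2 bound \<xi> u _ b_nonneg
            classK_nonneg[OF g linf_nonneg[OF norm_u u]]]) (use est \<xi> u in simp)
    also have "G (b ?d0 (real (k div M))) \<le> B ?d0 (real k)"
    proof -
      have "b ?d0 (real (k div M)) \<le> b ?d0 (max (real k / real M - 1) 0)"
        using classKL_antimono[OF b d0] time_change_le_div[OF M] by simp
      then have "G (b ?d0 (real (k div M))) \<le> G (b ?d0 (max (real k / real M - 1) 0))"
        using classK_mono[OF G b_nonneg] by simp
      then show ?thesis
        unfolding B_def using d0 by (simp add: add_increasing2)
    qed
    finally show ?thesis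
      by simp
  qed
  ultimately show ?thesis
    unfolding ISS_def by blast
qed

lemma eISS_iter_K_bounded_lin_imp_eISS:
  assumes wp: "well_posed n p Nx Nu F" and M: "0 < M"
    and iss: "eISS_iter M n p Nx Nu F A" and kb: "K_bounded_lin n p Nx Nu F A"
  shows "eISS n p Nx Nu F A"
proof -
  obtain C \<rho> g where C: "1 \<le> C" and \<rho>: "0 \<le> \<rho>" "\<rho> < 1" and g: "classK g"
    and est: "\<forall>\<xi>\<in>seqB n Nx. \<forall>u\<in>inputs p Nu. \<forall>j.
      dist_set Nx A (traj F \<xi> u (M * j)) \<le> max (C * \<rho> ^ j * dist_set Nx A \<xi>) (g (linf Nu u))"
    using iss unfolding eISS_iter_def by blast
  obtain c k2 where c: "0 < c" and k2: "classK k2" and bound: "\<forall>\<xi>\<in>seqB n Nx. \<forall>\<mu>\<in>seqB p Nu.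
      dist_set Nx A (F \<xi> \<mu>) \<le> c * dist_set Nx A \<xi> + k2 (supn Nu \<mu>)"
    using kb unfolding K_bounded_lin_def by blast
  obtain \<rho>' C0 where \<rho>': "0 < \<rho>'" "\<rho>' < 1" and C0: "1 \<le> C0"
    and rate: "\<And>k. \<rho> ^ (k div M) \<le> C0 * \<rho>' ^ k"
    using geometric_rate_subsampling[OF \<rho> M] by blast
  define L where "L = (c + 2) ^ M"
  have L: "1 \<le> L"
    unfolding L_def using c by simp
  define \<gamma> where "\<gamma> v = 2 * L * (g v + k2 v)" for v
  have "classK \<gamma>"
    unfolding \<gamma>_def using L by (intro classK_comp[OF classK_scale] classK_add g k2) simp
  moreover have "1 \<le> 2 * L * C * C0"
    using L C C0 by (metis mult_ge1_I one_le_numeral)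
  moreover have "dist_set Nx A (traj F \<xi> u k)
      \<le> max (2 * L * C * C0 * \<rho>' ^ k * dist_set Nx A \<xi>) (\<gamma> (linf Nu u))"
    if \<xi>: "\<xi> \<in> seqB n Nx" and u: "u \<in> inputs p Nu" for \<xi> u k
  proof -
    let ?d0 = "dist_set Nx A \<xi>" and ?v = "linf Nu u"
    have d0: "0 \<le> ?d0"
      using dist_nonneg[OF \<xi>] .
    have "dist_set Nx A (traj F \<xi> u k)
        \<le> max ((gain (\<lambda>s. c * s) ^^ M) (2 * (C * \<rho> ^ (k div M) * ?d0)))
          ((gain (\<lambda>s. c * s) ^^ M) (2 * (g ?v + k2 ?v)))"
      using C \<rho> d0 est \<xi> u
      by (intro traj_bound_from_samples[OF wp M classK_scale[OF c] k2 _ \<xi> u]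
          classK_nonneg[OF g linf_nonneg[OF norm_u u]]) (simp_all add: bound)
    also have "\<dots> = max (L * (2 * (C * \<rho> ^ (k div M) * ?d0))) (\<gamma> ?v)"
      unfolding funpow_gain_linear L_def \<gamma>_def by (simp add: algebra_simps)
    also have "L * (2 * (C * \<rho> ^ (k div M) * ?d0)) \<le> 2 * L * C * C0 * \<rho>' ^ k * ?d0"
      using mult_left_mono[OF rate, of "2 * L * C * ?d0"] L C d0 by (simp add: algebra_simps)
    finally show ?thesis
      by simp
  qed
  ultimately show ?thesis
    unfolding eISS_def using \<rho>' less_imp_le[OF \<rho>'(1)] by blast
qed

end

theorem proposition1:
  fixes n p :: "nat \<Rightarrow> nat"
    and Nx Nu :: "nat \<Rightarrow> (nat \<Rightarrow> real) \<Rightarrow> real"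
    and I :: "nat \<Rightarrow> nat set"
    and fi :: "nat \<Rightarrow> (nat \<Rightarrow> real) \<Rightarrow> (nat \<Rightarrow> nat \<Rightarrow> real) \<Rightarrow> (nat \<Rightarrow> real) \<Rightarrow> (nat \<Rightarrow> real)"
    and A :: "(nat \<Rightarrow> nat \<Rightarrow> real) set"
  assumes net: "network_data n p Nx Nu I fi"
    and wp: "well_posed n p Nx Nu (net_map I fi)"
    and A_sub: "A \<subseteq> seqB n Nx" and A_ne: "A \<noteq> {}" and A_closed: "closed_in_X n Nx A"
  shows "(ISS n p Nx Nu (net_map I fi) A \<longleftrightarrow>
            (\<exists>M\<ge>1. ISS_iter M n p Nx Nu (net_map I fi) A) \<and> K_bounded n p Nx Nu (net_map I fi) A)
       \<and> (eISS n p Nx Nu (net_map I fi) A \<longleftrightarrow>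
            (\<exists>M\<ge>1. eISS_iter M n p Nx Nu (net_map I fi) A) \<and> K_bounded_lin n p Nx Nu (net_map I fi) A)"
proof -
  interpret stability_setting n p Nx Nu "net_map I fi" A
    using net A_sub A_ne by unfold_locales (simp_all add: network_data_def)
  have pos: "1 \<le> M \<Longrightarrow> 0 < M" for M :: nat
    by simp
  show ?thesis
    using ISS_iter_one eISS_iter_one ISS_imp_K_bounded eISS_imp_K_bounded_lin
      ISS_iter_K_bounded_imp_ISS[OF wp pos] eISS_iter_K_bounded_lin_imp_eISS[OF wp pos]
    by blast
qed

end
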